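(* Let $\mathbb{F}$ be a finite field or $\mathbb{R}$, $\Delta>1$ and $D\le n$. For an $m\times n$ matrix $M$ over $\mathbb{F}$ which can $\Delta$-approximate the sparsity $d=\|\mathbf{x}\|_0$ of any $\mathbf{x}\in\mathbb{F}^n$ with sparsity at most $D$ from $M\mathbf{x}$, it is necessary that $$\mathrm{rank}\,M\ \ge\ n-\max_{V\ (\Delta,D)\text{-distinguishing}}\dim(V).$$
   Context: $M\mathbf{x}$ is the ordinary matrix-vector product over $\mathbb{F}$; $\|\mathbf{x}\|_0$ is the number of nonzero entries. $M$ can $\Delta$-approximate $d$ if a deterministic decoder given only $M\mathbf{x}$ outputs $\hat d$ with $\frac1\Delta\le\hat d/d\le\Delta$ for all $\mathbf{x}$ with $\|\mathbf{x}\|_0\le D$. A subspace $V\subseteq\mathbb{F}^n$ is $(\Delta,D)$-distinguishing if any two vectors $\mathbf{x},\mathbf{y}$ in the same coset of $V$ with $\|\mathbf{x}\|_0\le\|\mathbf{y}\|_0\le D$ satisfy $\|\mathbf{y}\|_0\le\Delta^2\|\mathbf{x}\|_0$. *)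

theory Defs
  imports "HOL-Analysis.Analysis"
begin

definition spars :: "'a::zero ^ 'n \<Rightarrow> nat" where
  "spars x = card {i. x $ i \<noteq> 0}"

text \<open>M can Delta-approximate the sparsity of every vector of sparsity at most D:
  a deterministic decoder dec, seeing only M x, outputs dhat with
  d / Delta \<le> dhat \<le> Delta * d, where d = spars x (for d > 0 this is
  1/Delta \<le> dhat/d \<le> Delta; for d = 0 it forces dhat = 0).\<close>
definition can_approx :: "'a::field ^ 'n ^ 'm \<Rightarrow> real \<Rightarrow> nat \<Rightarrow> bool" where
  "can_approx M \<Delta> D \<longleftrightarrow>
     (\<exists>dec :: 'a ^ 'm \<Rightarrow> real. \<forall>x :: 'a ^ 'n. spars x \<le> D \<longrightarrow>
        real (spars x) / \<Delta> \<le> dec (M *v x) \<and> dec (M *v x) \<le> \<Delta> * real (spars x))"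

definition distinguishing :: "real \<Rightarrow> nat \<Rightarrow> ('a::field ^ 'n) set \<Rightarrow> bool" where
  "distinguishing \<Delta> D V \<longleftrightarrow> vec.subspace V \<and>
     (\<forall>x y. x - y \<in> V \<longrightarrow> spars x \<le> spars y \<longrightarrow> spars y \<le> D \<longrightarrow>
        real (spars y) \<le> \<Delta>\<^sup>2 * real (spars x))"

end

theory Submission
  imports Defs
begin

text \<open>A decoder that sees only \<open>M x\<close> gives the same estimate on a whole coset of the null
  space of \<open>M\<close>; for two vectors of the coset with sparsities \<open>d \<le> d'\<close> that estimate is at least
  \<open>d' / \<Delta>\<close> and at most \<open>\<Delta> d\<close>, so \<open>d' \<le> \<Delta>\<^sup>2 d\<close>. Hence the null space is itself distinguishing,
  and rank-nullity gives \<open>rank M \<ge> n - dim ker M \<ge> n - max dim V\<close>. Since \<open>rank\<close> is row rank, the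
  rank-nullity step also needs column rank \<open>\<le>\<close> row rank, which holds because \<open>M x\<close> only depends
  on the pairings of \<open>x\<close> with a basis of the row space.\<close>

lemma (in finite_dimensional_vector_space_pair_1) dim_UNIV_le_dim_range_add_dim_kernel:
  assumes "Vector_Spaces.linear s1 s2 f"
  shows "vs1.dim UNIV \<le> vs2.dim (range f) + vs1.dim {x. f x = 0}"
proof -
  interpret f: Vector_Spaces.linear s1 s2 f by fact
  obtain C where C: "C \<subseteq> range f" "vs2.independent C" "range f \<subseteq> vs2.span C"
      "card C = vs2.dim (range f)"
    using vs2.basis_exists by blast
  have "range f \<subseteq> vs2.span (f ` B1)"
    using f.span_image vs1.span_Basis by auto
  with C(1) have "C \<subseteq> vs2.span (f ` B1)" by (rule order_trans)
  then have "finite C"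
    using vs2.independent_span_bound[OF finite_imageI[OF vs1.finite_Basis] C(2)] by simp
  have f_inv: "f (inv f c) = c" if "c \<in> C" for c
    using C(1) that by (blast intro: f_inv_into_f)
  define S where "S = vs1.span (inv f ` C)"
  define T where "T = {x. f x = 0}"
  have "UNIV \<subseteq> {x + y |x y. x \<in> S \<and> y \<in> T}"
  proof
    fix x
    have "f ` inv f ` C = C" using f_inv by (force simp: image_image)
    then have "vs2.span C = f ` S" unfolding S_def by (metis f.span_image)
    then have "f x \<in> f ` S" using C(3) by auto
    then obtain y where y: "y \<in> S" "f y = f x" by (metis imageE)
    then have "x - y \<in> T" by (simp add: T_def f.diff)
    then show "x \<in> {x + y |x y. x \<in> S \<and> y \<in> T}" using y(1) by force
  qed
  then have "vs1.dim UNIV \<le> vs1.dim {x + y |x y. x \<in> S \<and> y \<in> T}"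
    by (rule vs1.dim_subset)
  also have "\<dots> \<le> vs1.dim S + vs1.dim T"
    using vs1.dim_sums_Int[of S T] vs1.subspace_span f.subspace_kernel
    unfolding S_def T_def by fastforce
  also have "vs1.dim S \<le> card C"
    unfolding S_def vs1.dim_span
    by (meson card_image_le finite_imageI le_trans vs1.dim_le_card vs1.span_superset \<open>finite C\<close>)
  finally show ?thesis using C(4) T_def by simp
qed

lemma range_matrix_vector_mult_subset_span:
  fixes M :: "'a::field ^ 'n ^ 'm"
  assumes "finite B" and "rows M \<subseteq> vec.span B"
  obtains w where "range ((*v) M) \<subseteq> vec.span (w ` B)"
proof -
  have "\<exists>u. row i M = (\<Sum>b\<in>B. u b *s b)" for i
    using assms vec.span_finite[of B] by (auto simp: rows_def)
  then obtain c where c: "\<And>i. row i M = (\<Sum>b\<in>B. c i b *s b)" by metis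
  define w where "w b = (\<chi> i. c i b)" for b
  have expand: "M *v x = (\<Sum>b\<in>B. (\<Sum>j\<in>UNIV. b $ j * x $ j) *s w b)" for x
  proof -
    have "M $ i $ j = (\<Sum>b\<in>B. c i b * b $ j)" for i j
      using arg_cong[OF c, of "\<lambda>r. r $ j"] by (simp add: row_def)
    then show ?thesis
      by (simp add: vec_eq_iff matrix_vector_mult_def w_def sum_distrib_left
          sum_distrib_right mult_ac sum.swap[of _ B])
  qed
  have "M *v x \<in> vec.span (w ` B)" for x
    unfolding expand by (intro vec.span_sum vec.span_scale vec.span_base) simp
  then have "range ((*v) M) \<subseteq> vec.span (w ` B)" by blast
  then show thesis by (rule that)
qed

lemma dim_range_matrix_vector_mult_le_rank:
  fixes M :: "'a::field ^ 'n ^ 'm"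
  shows "vec.dim (range ((*v) M)) \<le> rank M"
proof -
  obtain B where B: "B \<subseteq> rows M" "vec.independent B" "rows M \<subseteq> vec.span B"
      "card B = rank M"
    using vec.basis_exists[of "rows M"] by (auto simp: row_rank_def_gen)
  have "finite B" using B(2) vec.finiteI_independent by blast
  obtain w where "range ((*v) M) \<subseteq> vec.span (w ` B)"
    using range_matrix_vector_mult_subset_span[OF \<open>finite B\<close> B(3)] .
  then have "vec.dim (range ((*v) M)) \<le> card (w ` B)"
    using \<open>finite B\<close> by (simp add: vec.dim_le_card)
  also have "\<dots> \<le> rank M"
    using card_image_le[OF \<open>finite B\<close>] B(4) by simp
  finally show ?thesis .
qed

lemma card_le_rank_add_dim_null_space:
  fixes M :: "'a::field ^ 'n ^ 'm"
  shows "CARD('n) \<le> rank M + vec.dim {x. M *v x = 0}"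
  using vec.dim_UNIV_le_dim_range_add_dim_kernel[OF matrix_vector_mul_linear_gen, of M]
    dim_range_matrix_vector_mult_le_rank[of M]
  by (simp add: card_cart_basis)

lemma null_space_distinguishing_if_can_approx:
  fixes M :: "'a::field ^ 'n ^ 'm"
  assumes "\<Delta> > 0" and "can_approx M \<Delta> D"
  shows "distinguishing \<Delta> D {x. M *v x = 0}"
  unfolding distinguishing_def
proof (intro conjI allI impI)
  show "vec.subspace {x. M *v x = 0}" by (rule vec.subspace_kernel)
  obtain dec :: "'a ^ 'm \<Rightarrow> real" where dec: "\<And>x. spars x \<le> D \<Longrightarrow>
        real (spars x) / \<Delta> \<le> dec (M *v x) \<and> dec (M *v x) \<le> \<Delta> * real (spars x)"
    using assms(2) unfolding can_approx_def by blast
  fix x y :: "'a ^ 'n"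
  assume "x - y \<in> {x. M *v x = 0}" and "spars x \<le> spars y" and "spars y \<le> D"
  then have "M *v x = M *v y" and "spars x \<le> D"
    by (simp_all add: matrix_vector_mult_diff_distrib)
  then have "real (spars y) / \<Delta> \<le> \<Delta> * real (spars x)"
    using dec[of x] dec[of y] \<open>spars y \<le> D\<close> by (metis order_trans)
  then show "real (spars y) \<le> \<Delta>\<^sup>2 * real (spars x)"
    using assms(1) by (simp add: divide_le_eq power2_eq_square mult_ac)
qed

lemma dim_le_Max_dim_distinguishing:
  fixes V :: "('a::field ^ 'n) set"
  assumes "distinguishing \<Delta> D V"
  shows "vec.dim V \<le> Max {vec.dim W | W :: ('a ^ 'n) set. distinguishing \<Delta> D W}"
proof (rule Max_ge)
  have "vec.dim W \<le> CARD('n)" for W :: "('a ^ 'n) set"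
    using vec.dim_subset[of W UNIV] by (simp add: card_cart_basis)
  then have "{vec.dim W | W :: ('a ^ 'n) set. distinguishing \<Delta> D W} \<subseteq> {..CARD('n)}"
    by auto
  then show "finite {vec.dim W | W :: ('a ^ 'n) set. distinguishing \<Delta> D W}"
    by (rule finite_subset) simp
qed (use assms in blast)

lemma rank_ge_card_minus_Max_dim_distinguishing:
  fixes M :: "'a::field ^ 'n ^ 'm"
  assumes "\<Delta> > 0" and "can_approx M \<Delta> D"
  shows "int (rank M) \<ge> int CARD('n) -
           int (Max {vec.dim V | V :: ('a ^ 'n) set. distinguishing \<Delta> D V})"
  using card_le_rank_add_dim_null_space[of M]
    dim_le_Max_dim_distinguishing[OF null_space_distinguishing_if_can_approx[OF assms]]
  by linarith

theorem theorem7: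
  fixes \<Delta> :: real
    and M :: "'a::field ^ 'n ^ 'm" and D :: nat
    and M' :: "real ^ 'k ^ 'l" and D' :: nat
  assumes "finite (UNIV :: 'a set)"
    and "\<Delta> > 1"
  shows "(D \<le> CARD('n) \<and> can_approx M \<Delta> D \<longrightarrow>
           int (rank M) \<ge> int CARD('n) -
             int (Max {vec.dim V | V :: ('a ^ 'n) set. distinguishing \<Delta> D V}))
       \<and> (D' \<le> CARD('k) \<and> can_approx M' \<Delta> D' \<longrightarrow>
           int (rank M') \<ge> int CARD('k) -
             int (Max {vec.dim V | V :: (real ^ 'k) set. distinguishing \<Delta> D' V}))"
proof -
  have "\<Delta> > 0" using assms(2) by simp
  then show ?thesis
    using rank_ge_card_minus_Max_dim_distinguishing[of \<Delta> M D]
      rank_ge_card_minus_Max_dim_distinguishing[of \<Delta> M' D']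
    by blast
qed

end
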